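(* Let $\delta>0$. There exist an integer $N$ and a real $\kappa>0$ such that for all $c\ge0$ and all integers $n\ge\max(N,\kappa c)$, $$\lambda_n(c)\le e^{-\delta(n-\kappa c)} .$$
   Context: For $c>0$, $\lambda_n(c)$, $n\ge0$, are the eigenvalues, arranged so that $1>\lambda_0(c)>\lambda_1(c)>\cdots>0$, of the compact self-adjoint operator on $L^2([-1,1])$ $$F_c\psi(x)=\int_{-1}^1\frac{\sin c(x-y)}{\pi(x-y)}\,\psi(y)\,dy,$$ whose eigenfunctions are the prolate spheroidal wave functions $\psi_{n,c}$ (the bounded solutions of $((1-x^2)\psi')'+(\chi_n(c)-c^2x^2)\psi=0$ on $[-1,1]$ with eigenvalue $\chi_n(c)$ increasing in $n$). *)

theory Defs
  imports "HOL-Analysis.Analysis"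
begin

definition sinc_kernel :: "real \<Rightarrow> real \<Rightarrow> real" where
  "sinc_kernel c t = (if t = 0 then c / pi else sin (c * t) / (pi * t))"

definition is_Fc_eigenvalue :: "real \<Rightarrow> real \<Rightarrow> bool" where
  "is_Fc_eigenvalue c mu \<longleftrightarrow>
     (\<exists>psi :: real \<Rightarrow> real.
        psi \<in> borel_measurable lborel \<and>
        set_integrable lborel {-1..1} (\<lambda>y. (psi y)\<^sup>2) \<and>
        \<not> (AE x in lborel. x \<in> {-1..1} \<longrightarrow> psi x = 0) \<and>
        (AE x in lborel. x \<in> {-1..1} \<longrightarrow>
           (LINT y:{-1..1}|lborel. sinc_kernel c (x - y) * psi y) = mu * psi x))"

text \<open>lambda_n(c): the (n+1)-st largest positive eigenvalue of F_c, i.e. the positive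
  eigenvalue x having exactly n eigenvalues strictly larger than it
  (eigenvalues are simple, so this is the standard enumeration
  lambda_0 > lambda_1 > ...). Convention 0 if no such eigenvalue exists (e.g. c = 0).\<close>
definition prolate_eigenvalue :: "real \<Rightarrow> nat \<Rightarrow> real" where
  "prolate_eigenvalue c n =
     (let P = (\<lambda>x. is_Fc_eigenvalue c x \<and> 0 < x \<and>
                    finite {y. is_Fc_eigenvalue c y \<and> x < y} \<and>
                    card {y. is_Fc_eigenvalue c y \<and> x < y} = n)
      in if (\<exists>x. P x) then (THE x. P x) else 0)"

end

theory Submission
  imports Defs
begin

(* The core estimate is  lambda_n(c) <= 2 B(c,n)  with
   B(c,n) = c^(n+1) 2^n / ((n+1)! pi), the Maclaurin remainder bound of the
   sinc kernel on [-2,2].  Take eigenfunctions psi_t for the n+1 eigenvalues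
   t >= lambda_n(c); they are pairwise orthogonal because the kernel is
   symmetric.  Since there are n+1 of them, some nonzero combination f is
   orthogonal to 1, y, ..., y^(n-1).  The Taylor polynomial of degree < n of
   sin(c(x-y))/(pi(x-y)) is a polynomial in y, so it is annihilated by f and
   only the remainder acts:  |F_c f| <= B ||f||_1  on [-1,1]. *)

abbreviation J :: "real set" where "J \<equiv> {-1..1}"

section \<open>Square-integrable functions on [-1,1]\<close>

definition L2 :: "(real \<Rightarrow> real) \<Rightarrow> bool" where
  "L2 f \<longleftrightarrow> f \<in> borel_measurable lborel \<and> integrable lborel (\<lambda>x. indicator J x * (f x)\<^sup>2)"

definition ipJ :: "(real \<Rightarrow> real) \<Rightarrow> (real \<Rightarrow> real) \<Rightarrow> real" where
  "ipJ f g = (LINT x|lborel. indicator J x * (f x * g x))"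

definition L1J :: "(real \<Rightarrow> real) \<Rightarrow> real" where
  "L1J f = (LINT x|lborel. \<bar>indicator J x * f x\<bar>)"

lemma L2_measurable [measurable_dest]: "L2 f \<Longrightarrow> f \<in> borel_measurable borel"
  by (simp add: L2_def)

lemma integrable_indicator_J_const: "integrable lborel (\<lambda>x. indicator J x * (B::real))"
proof -
  have "integrable lborel (\<lambda>x. B * indicator J x)"
    by (intro integrable_mult_right integrable_real_indicator) (auto simp: emeasure_lborel_Icc)
  then show ?thesis by (simp add: mult.commute)
qed

lemma integrable_dominated:
  fixes f g :: "'a \<Rightarrow> real"
  assumes "integrable M f" "g \<in> borel_measurable M" "\<And>x. \<bar>g x\<bar> \<le> \<bar>f x\<bar>"
  shows "integrable M g"
  by (rule Bochner_Integration.integrable_bound[OF assms(1,2)]) (use assms(3) in auto)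

lemma integrable_bounded_on_J:
  fixes g :: "real \<Rightarrow> real"
  assumes "g \<in> borel_measurable lborel" "\<And>x. x \<in> J \<Longrightarrow> \<bar>g x\<bar> \<le> B"
  shows "integrable lborel (\<lambda>x. indicator J x * g x)"
proof (rule integrable_dominated[OF integrable_indicator_J_const[of B]])
  show "(\<lambda>x. indicator J x * g x) \<in> borel_measurable lborel" using assms(1) by measurable
  show "\<bar>indicator J x * g x\<bar> \<le> \<bar>indicator J x * B\<bar>" for x
    using assms(2)[of x] by (auto split: split_indicator)
qed

lemma L2_bounded:
  fixes g :: "real \<Rightarrow> real"
  assumes "g \<in> borel_measurable lborel" "\<And>x. x \<in> J \<Longrightarrow> \<bar>g x\<bar> \<le> B"
  shows "L2 g"
  unfolding L2_def
proof
  show "integrable lborel (\<lambda>x. indicator J x * (g x)\<^sup>2)"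
  proof (rule integrable_bounded_on_J[of _ "B\<^sup>2"])
    show "(\<lambda>x. (g x)\<^sup>2) \<in> borel_measurable lborel" using assms(1) by measurable
    show "\<bar>(g x)\<^sup>2\<bar> \<le> B\<^sup>2" if "x \<in> J" for x
      using power_mono[OF assms(2)[OF that] abs_ge_zero, of 2] by simp
  qed
qed (use assms in simp)

lemma L2_power: "L2 (\<lambda>y. y ^ j)"
proof (rule L2_bounded[of _ 1])
  show "\<bar>x ^ j\<bar> \<le> 1" if "x \<in> J" for x :: real
  proof -
    have "\<bar>x\<bar> \<le> 1" using that by auto
    then show ?thesis by (simp add: power_abs power_le_one)
  qed
qed simp

lemma L2_integrable: assumes "L2 f" shows "integrable lborel (\<lambda>x. indicator J x * f x)"
proof (rule integrable_dominated)
  show "integrable lborel (\<lambda>x. indicator J x * 1 + indicator J x * (f x)\<^sup>2)"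
    using assms integrable_indicator_J_const[of 1] unfolding L2_def
    by (intro Bochner_Integration.integrable_add) auto
  show "(\<lambda>x. indicator J x * f x) \<in> borel_measurable lborel" using assms by measurable
  show "\<bar>indicator J x * f x\<bar> \<le> \<bar>indicator J x * 1 + indicator J x * (f x)\<^sup>2\<bar>" for x
  proof -
    have "0 \<le> (\<bar>f x\<bar> - 1/2)\<^sup>2" by simp
    then have "\<bar>f x\<bar> \<le> 1 + (f x)\<^sup>2" by (simp add: power2_eq_square algebra_simps)
    then show ?thesis by (auto split: split_indicator)
  qed
qed

lemma L2_product_integrable:
  assumes "L2 f" "L2 g" shows "integrable lborel (\<lambda>x. indicator J x * (f x * g x))"
proof (rule integrable_dominated)
  show "integrable lborel (\<lambda>x. (indicator J x * (f x)\<^sup>2 + indicator J x * (g x)\<^sup>2) / 2)"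
    using assms unfolding L2_def by (intro integrable_divide_zero Bochner_Integration.integrable_add) auto
  show "(\<lambda>x. indicator J x * (f x * g x)) \<in> borel_measurable lborel" using assms by measurable
  show "\<bar>indicator J x * (f x * g x)\<bar> \<le> \<bar>(indicator J x * (f x)\<^sup>2 + indicator J x * (g x)\<^sup>2) / 2\<bar>" for x
  proof -
    have "0 \<le> (\<bar>f x\<bar> - \<bar>g x\<bar>)\<^sup>2" by simp
    then have "\<bar>f x * g x\<bar> \<le> ((f x)\<^sup>2 + (g x)\<^sup>2) / 2"
      by (simp add: power2_eq_square abs_mult algebra_simps)
    then show ?thesis by (auto split: split_indicator)
  qed
qed

lemma L2_diff:
  assumes "L2 f" "L2 g" shows "L2 (\<lambda>x. f x - g x)"
  unfolding L2_def
proof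
  show "(\<lambda>x. f x - g x) \<in> borel_measurable lborel" using assms by measurable
  have "(\<lambda>x. indicator J x * (f x - g x)\<^sup>2) = (\<lambda>x. indicator J x * (f x)\<^sup>2
          - 2 * (indicator J x * (f x * g x)) + indicator J x * (g x)\<^sup>2)"
    by (auto simp: power2_eq_square algebra_simps)
  then show "integrable lborel (\<lambda>x. indicator J x * (f x - g x)\<^sup>2)"
    using assms L2_product_integrable[OF assms] unfolding L2_def by auto
qed

lemma L2_lincomb:
  assumes "finite T" "\<And>t. t \<in> T \<Longrightarrow> L2 (f t)"
  shows "L2 (\<lambda>x. \<Sum>t\<in>T. a t * f t x)"
  unfolding L2_def
proof
  show "(\<lambda>x. \<Sum>t\<in>T. a t * f t x) \<in> borel_measurable lborel"
    using assms unfolding L2_def by (intro borel_measurable_sum borel_measurable_times) auto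
  have eq: "(\<lambda>x. indicator J x * (\<Sum>t\<in>T. a t * f t x)\<^sup>2) =
     (\<lambda>x. \<Sum>s\<in>T. \<Sum>t\<in>T. (a s * a t) * (indicator J x * (f s x * f t x)))"
    by (auto simp: power2_eq_square sum_product sum_distrib_left algebra_simps intro!: sum.cong)
  show "integrable lborel (\<lambda>x. indicator J x * (\<Sum>t\<in>T. a t * f t x)\<^sup>2)"
    unfolding eq using assms L2_product_integrable
    by (intro Bochner_Integration.integrable_sum integrable_mult_right) auto
qed

lemma ipJ_commute: "ipJ f g = ipJ g f"
  by (simp add: ipJ_def mult.commute)

lemma ipJ_self_nonneg: "0 \<le> ipJ f f"
  unfolding ipJ_def by (intro integral_nonneg_AE AE_I2) (auto split: split_indicator)

lemma ipJ_scale_left: "ipJ (\<lambda>x. a * f x) g = a * ipJ f g"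
  unfolding ipJ_def by (simp add: mult_ac flip: integral_mult_right_zero)

lemma L1J_nonneg: "0 \<le> L1J f"
  unfolding L1J_def by (intro integral_nonneg_AE AE_I2) simp

lemma ipJ_lincomb:
  assumes "finite T" "\<And>t. t \<in> T \<Longrightarrow> L2 (\<psi> t)" "L2 g"
  shows "ipJ (\<lambda>x. \<Sum>t\<in>T. a t * \<psi> t x) g = (\<Sum>t\<in>T. a t * ipJ (\<psi> t) g)"
proof -
  have "ipJ (\<lambda>x. \<Sum>t\<in>T. a t * \<psi> t x) g
      = (LINT x|lborel. (\<Sum>t\<in>T. a t * (indicator J x * (\<psi> t x * g x))))"
    unfolding ipJ_def
    by (intro Bochner_Integration.integral_cong refl)
       (simp add: sum_distrib_left sum_distrib_right mult_ac)
  also have "\<dots> = (\<Sum>t\<in>T. a t * ipJ (\<psi> t) g)"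
    unfolding ipJ_def using assms L2_product_integrable
    by (subst Bochner_Integration.integral_sum) auto
  finally show ?thesis .
qed

lemma ipJ_diff:
  assumes "L2 f" "L2 g" "L2 h"
  shows "ipJ (\<lambda>x. f x - g x) h = ipJ f h - ipJ g h"
  unfolding ipJ_def using L2_product_integrable[OF assms(1,3)] L2_product_integrable[OF assms(2,3)]
  by (simp add: left_diff_distrib right_diff_distrib flip: Bochner_Integration.integral_diff)

lemma ipJ_cong_AE:
  assumes "f \<in> borel_measurable borel" "f' \<in> borel_measurable borel" "g \<in> borel_measurable borel"
    and "AE x in lborel. x \<in> J \<longrightarrow> f x = f' x"
  shows "ipJ f g = ipJ f' g"
  unfolding ipJ_def
  by (rule integral_cong_AE) (use assms in \<open>measurable, measurable, auto elim!: eventually_mono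
      split: split_indicator\<close>)

text \<open>The L1 norm is controlled by the L2 norm: \<open>||f||\<^sub>1\<^sup>2 \<le> |J| ||f||\<^sub>2\<^sup>2 = 2 ||f||\<^sub>2\<^sup>2\<close>.\<close>

lemma L1J_square_le:
  assumes "L2 f" shows "L1J f * L1J f \<le> 2 * ipJ f f"
proof -
  define A where "A = L1J f"
  have int_ff: "integrable lborel (\<lambda>x. indicator J x * (f x * f x))"
    using L2_product_integrable[OF assms assms] .
  have int_abs: "integrable lborel (\<lambda>x. \<bar>indicator J x * f x\<bar>)"
    using L2_integrable[OF assms] by auto
  have int_const: "integrable lborel (\<lambda>x. (A * A / 4) * indicator J x)"
    by (intro integrable_mult_right integrable_real_indicator) auto
  have "0 \<le> (LINT x|lborel. indicator J x * (f x * f x) - A * \<bar>indicator J x * f x\<bar>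
                                + (A * A / 4) * indicator J x)"
  proof (rule integral_nonneg_AE, intro AE_I2)
    fix x
    have "0 \<le> (\<bar>f x\<bar> - A / 2)\<^sup>2" by simp
    then have "0 \<le> \<bar>f x\<bar> * \<bar>f x\<bar> - A * \<bar>f x\<bar> + A * A / 4"
      by (simp add: power2_eq_square algebra_simps)
    then show "0 \<le> indicator J x * (f x * f x) - A * \<bar>indicator J x * f x\<bar> + (A * A / 4) * indicator J x"
      by (auto split: split_indicator simp: abs_mult[symmetric])
  qed
  also have "\<dots> = ipJ f f - A * A + (A * A / 4) * 2"
    using int_ff int_abs int_const
    by (simp add: Bochner_Integration.integral_add Bochner_Integration.integral_diff
        ipJ_def A_def L1J_def)
  finally show ?thesis unfolding A_def by simp
qed

section \<open>A dimension count\<close>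

lemma homogeneous_system_nontrivial_solution:
  fixes w :: "'a \<Rightarrow> nat \<Rightarrow> real"
  assumes "finite T" "n < card T"
  shows "\<exists>\<alpha>. (\<exists>t\<in>T. \<alpha> t \<noteq> 0) \<and> (\<forall>j<n. (\<Sum>t\<in>T. \<alpha> t * w t j) = 0)"
  using assms
proof (induction n arbitrary: T w)
  case 0
  then obtain t where "t \<in> T" by fastforce
  then show ?case by (intro exI[of _ "\<lambda>_. 1"]) auto
next
  case (Suc n)
  show ?case
  proof (cases "\<forall>t\<in>T. w t n = 0")
    case True
    \<comment> \<open>the last equation is void\<close>
    from Suc.IH[of T w] Suc.prems obtain \<alpha> where
      "\<exists>t\<in>T. \<alpha> t \<noteq> 0" "\<forall>j<n. (\<Sum>t\<in>T. \<alpha> t * w t j) = 0"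
      by auto
    with True show ?thesis by (intro exI[of _ \<alpha>]) (auto simp: less_Suc_eq)
  next
    case False
    \<comment> \<open>eliminate the unknown \<open>t0\<close> using the last equation\<close>
    then obtain t0 where t0: "t0 \<in> T" "w t0 n \<noteq> 0" by auto
    define T' where "T' = T - {t0}"
    define w' where "w' t j = w t j - (w t n / w t0 n) * w t0 j" for t j
    have "finite T'" "n < card T'" using Suc.prems t0 by (auto simp: T'_def)
    from Suc.IH[OF this, of w'] obtain \<alpha>' where \<alpha>': "\<exists>t\<in>T'. \<alpha>' t \<noteq> 0"
      "\<forall>j<n. (\<Sum>t\<in>T'. \<alpha>' t * w' t j) = 0" by auto
    define S where "S = (\<Sum>t\<in>T'. \<alpha>' t * w t n)"
    define \<alpha> where "\<alpha> t = (if t = t0 then - S / w t0 n else \<alpha>' t)" for t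
    have split: "(\<Sum>t\<in>T. \<alpha> t * w t j) = - S / w t0 n * w t0 j + (\<Sum>t\<in>T'. \<alpha>' t * w t j)" for j
    proof -
      have "(\<Sum>t\<in>T. \<alpha> t * w t j) = \<alpha> t0 * w t0 j + (\<Sum>t\<in>T'. \<alpha> t * w t j)"
        unfolding T'_def using t0 Suc.prems(1) by (simp add: sum.remove)
      also have "(\<Sum>t\<in>T'. \<alpha> t * w t j) = (\<Sum>t\<in>T'. \<alpha>' t * w t j)"
        by (intro sum.cong) (auto simp: \<alpha>_def T'_def)
      finally show ?thesis by (simp add: \<alpha>_def)
    qed
    have eqs: "(\<Sum>t\<in>T. \<alpha> t * w t j) = 0" if "j < Suc n" for j
    proof (cases "j = n")
      case True
      then show ?thesis unfolding split using t0 by (simp add: S_def)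
    next
      case False
      have "0 = (\<Sum>t\<in>T'. \<alpha>' t * w' t j)" using \<alpha>' that False by auto
      also have "\<dots> = (\<Sum>t\<in>T'. \<alpha>' t * w t j) - S / w t0 n * w t0 j"
        by (simp add: w'_def S_def algebra_simps sum_subtractf sum_distrib_left
            sum_divide_distrib sum_distrib_right)
      finally show ?thesis unfolding split by simp
    qed
    have "\<exists>t\<in>T. \<alpha> t \<noteq> 0" using \<alpha>' by (auto simp: \<alpha>_def T'_def)
    with eqs show ?thesis by blast
  qed
qed

section \<open>The sinc kernel and its Taylor polynomial\<close>

lemma sinc_kernel_measurable [measurable]: "sinc_kernel c \<in> borel_measurable borel"
  unfolding sinc_kernel_def by measurable

lemma sinc_kernel_even: "sinc_kernel c (-t) = sinc_kernel c t"
  by (simp add: sinc_kernel_def)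

lemma sinc_kernel_bound: assumes "c \<ge> 0" shows "\<bar>sinc_kernel c t\<bar> \<le> c / pi"
proof (cases "t = 0")
  case False
  have "\<bar>sin (c*t)\<bar> / (pi * \<bar>t\<bar>) \<le> (c * \<bar>t\<bar>) / (pi * \<bar>t\<bar>)"
    using abs_sin_x_le_abs_x[of "c*t"] assms by (intro divide_right_mono) (auto simp: abs_mult)
  then show ?thesis using False by (simp add: sinc_kernel_def abs_mult)
qed (use assms in \<open>simp add: sinc_kernel_def\<close>)

text \<open>The Taylor polynomial of degree \<open>< n\<close> of \<open>sin(ct)/(\<pi>t)\<close>, and the bound
  \<open>B(c,n)\<close> for its remainder on \<open>|t| \<le> 2\<close>.\<close>

definition sinc_taylor :: "real \<Rightarrow> nat \<Rightarrow> real \<Rightarrow> real" where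
  "sinc_taylor c n t = (\<Sum>i<n. sin_coeff (Suc i) * c^(Suc i) * t^i / pi)"

definition sinc_remainder_bound :: "real \<Rightarrow> nat \<Rightarrow> real" where
  "sinc_remainder_bound c n = c^(Suc n) * 2^n / (fact (Suc n) * pi)"

lemma sinc_taylor_measurable [measurable]: "sinc_taylor c n \<in> borel_measurable borel"
  unfolding sinc_taylor_def by measurable

lemma sinc_taylor_times: "sinc_taylor c n t * (pi * t) = (\<Sum>m<Suc n. sin_coeff m * (c * t) ^ m)"
proof -
  have "sinc_taylor c n t * (pi * t) = (\<Sum>i<n. sin_coeff (Suc i) * (c * t) ^ (Suc i))"
    unfolding sinc_taylor_def sum_distrib_right by (intro sum.cong) (auto simp: power_mult_distrib)
  also have "\<dots> = (\<Sum>m<Suc n. sin_coeff m * (c * t) ^ m)"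
    by (subst sum.lessThan_Suc_shift) (simp add: sin_coeff_def)
  finally show ?thesis .
qed

lemma sinc_taylor_error:
  assumes c: "c \<ge> 0"
  shows "\<bar>sinc_kernel c t - sinc_taylor c n t\<bar> \<le> c^(Suc n) * \<bar>t\<bar>^n / (fact (Suc n) * pi)"
proof (cases "t = 0")
  case True
  have "sinc_taylor c (Suc m) 0 = c / pi" for m
    unfolding sinc_taylor_def by (subst sum.lessThan_Suc_shift) (simp add: sin_coeff_def)
  then show ?thesis using True c
    by (cases n) (simp_all add: sinc_kernel_def sinc_taylor_def)
next
  case False
  define S where "S = (\<Sum>m<Suc n. sin_coeff m * (c * t) ^ m)"
  have "sinc_taylor c n t = S / (pi * t)"
    using False unfolding S_def sinc_taylor_times[symmetric] by simp
  then have "sinc_kernel c t - sinc_taylor c n t = (sin (c * t) - S) / (pi * t)"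
    using False by (simp add: sinc_kernel_def diff_divide_distrib)
  then have "\<bar>sinc_kernel c t - sinc_taylor c n t\<bar> = \<bar>sin (c * t) - S\<bar> / (pi * \<bar>t\<bar>)"
    by (simp add: abs_mult)
  also have "\<dots> \<le> (inverse (fact (Suc n)) * \<bar>c * t\<bar> ^ Suc n) / (pi * \<bar>t\<bar>)"
    unfolding S_def by (intro divide_right_mono Maclaurin_sin_bound) auto
  also have "\<dots> = c^(Suc n) * \<bar>t\<bar>^n / (fact (Suc n) * pi)"
  proof -
    have power: "\<bar>c * t\<bar> ^ Suc n = (c^(Suc n) * \<bar>t\<bar>^n) * \<bar>t\<bar>"
      using c by (simp add: abs_mult power_mult_distrib mult_ac)
    have "inverse F * (A * \<bar>t\<bar>) / (pi * \<bar>t\<bar>) = A / (F * pi)" for F A :: real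
      using False by (simp add: field_simps)
    from this[of "fact (Suc n)" "c^(Suc n) * \<bar>t\<bar>^n"] show ?thesis unfolding power .
  qed
  finally show ?thesis .
qed

lemma sinc_taylor_error_on_J:
  assumes c: "c \<ge> 0" and t: "\<bar>t\<bar> \<le> 2"
  shows "\<bar>sinc_kernel c t - sinc_taylor c n t\<bar> \<le> sinc_remainder_bound c n"
proof -
  have "c^(Suc n) * \<bar>t\<bar>^n \<le> c^(Suc n) * 2^n"
    using c t by (intro mult_left_mono power_mono) auto
  then have "c^(Suc n) * \<bar>t\<bar>^n / (fact (Suc n) * pi) \<le> sinc_remainder_bound c n"
    unfolding sinc_remainder_bound_def by (intro divide_right_mono) auto
  then show ?thesis using sinc_taylor_error[OF c, of t n] by linarith
qed

lemma polynomial_translate: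
  fixes a :: "nat \<Rightarrow> real"
  shows "\<exists>b. \<forall>y. (\<Sum>i<n. a i * (x - y)^i) = (\<Sum>j<n. b j * y^j)"
proof -
  define b where "b j = (\<Sum>i<n. a i * (of_nat (i choose j) * (-1)^j * x^(i-j)))" for j
  have binomial: "(x - y)^i = (\<Sum>j<n. of_nat (i choose j) * (-1)^j * x^(i-j) * y^j)"
    if "i < n" for i y
  proof -
    have "(x - y)^i = (-y + x)^i" by simp
    also have "\<dots> = (\<Sum>j\<le>i. of_nat (i choose j) * (-y)^j * x^(i-j))"
      by (rule binomial_ring)
    also have "\<dots> = (\<Sum>j<n. of_nat (i choose j) * (-y)^j * x^(i-j))"
      using that by (intro sum.mono_neutral_left) (auto simp: binomial_eq_0)
    also have "\<dots> = (\<Sum>j<n. of_nat (i choose j) * (-1)^j * x^(i-j) * y^j)"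
    proof (intro sum.cong refl)
      fix j
      have "(-y)^j = (-1)^j * y^j" by (metis mult_minus1 power_mult_distrib)
      then show "of_nat (i choose j) * (-y)^j * x^(i-j) = of_nat (i choose j) * (-1)^j * x^(i-j) * y^j"
        by (simp only: mult_ac)
    qed
    finally show ?thesis .
  qed
  have "(\<Sum>i<n. a i * (x - y)^i) = (\<Sum>j<n. b j * y^j)" for y
  proof -
    have "(\<Sum>i<n. a i * (x - y)^i)
        = (\<Sum>i<n. \<Sum>j<n. a i * (of_nat (i choose j) * (-1)^j * x^(i-j)) * y^j)"
      using binomial by (auto simp: sum_distrib_left mult.assoc intro!: sum.cong)
    also have "\<dots> = (\<Sum>j<n. b j * y^j)"
      unfolding b_def sum_distrib_right by (rule sum.swap)
    finally show ?thesis .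
  qed
  then show ?thesis by blast
qed

lemma sinc_taylor_translate:
  "\<exists>b. \<forall>y. sinc_taylor c n (x - y) = (\<Sum>j<n. b j * y^j)"
  using polynomial_translate[where a="\<lambda>i. sin_coeff (Suc i) * c^(Suc i) / pi" and n=n and x=x]
  by (simp add: sinc_taylor_def)

section \<open>The operator \<open>F\<^sub>c\<close>\<close>

definition Kop :: "real \<Rightarrow> (real \<Rightarrow> real) \<Rightarrow> real \<Rightarrow> real" where
  "Kop c f x = ipJ (\<lambda>y. sinc_kernel c (x - y)) f"

lemma Kop_measurable [measurable]:
  assumes "f \<in> borel_measurable borel" shows "Kop c f \<in> borel_measurable borel"
  unfolding Kop_def ipJ_def using assms by measurable

lemma L2_sinc_translate: assumes "c \<ge> 0" shows "L2 (\<lambda>y. sinc_kernel c (x - y))"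
  by (rule L2_bounded[of _ "c / pi"]) (use sinc_kernel_bound[OF assms] in auto)

lemma Kop_lincomb:
  assumes "c \<ge> 0" "finite T" "\<And>t. t \<in> T \<Longrightarrow> L2 (\<psi> t)"
  shows "Kop c (\<lambda>y. \<Sum>t\<in>T. \<alpha> t * \<psi> t y) x = (\<Sum>t\<in>T. \<alpha> t * Kop c (\<psi> t) x)"
  unfolding Kop_def
  using ipJ_lincomb[OF assms(2,3) L2_sinc_translate[OF assms(1)]] by (simp add: ipJ_commute)

text \<open>\<open>F\<^sub>c\<close> is symmetric: the kernel is even, so both iterated integrals of
  \<open>sinc(x - y) \<phi>(y) \<psi>(x)\<close> over \<open>J \<times> J\<close> agree by Fubini.\<close>

lemma Kop_symmetric:
  assumes c: "c \<ge> 0" and L: "L2 \<phi>" "L2 \<psi>"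
  shows "ipJ (Kop c \<phi>) \<psi> = ipJ \<phi> (Kop c \<psi>)"
proof -
  define G where "G x y = indicator J x * indicator J y * (sinc_kernel c (x - y) * \<phi> y * \<psi> x)" for x y
  have [measurable]: "\<phi> \<in> borel_measurable borel" "\<psi> \<in> borel_measurable borel" using L by auto
  have G_measurable [measurable]: "(\<lambda>(x,y). G x y) \<in> borel_measurable (lborel \<Otimes>\<^sub>M lborel)"
    unfolding G_def by measurable
  have G_int_y: "integrable lborel (\<lambda>y. G x y)" for x
    using integrable_mult_right[OF L2_product_integrable[OF L2_sinc_translate[OF c, of x] L(1)],
        of "indicator J x * \<psi> x"]
    unfolding G_def by (simp add: algebra_simps)
  have G_abs_bound: "(LINT y|lborel. norm (G x y)) \<le> (c / pi * L1J \<phi>) * \<bar>indicator J x * \<psi> x\<bar>" for x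
  proof -
    have "(LINT y|lborel. norm (G x y))
        \<le> (LINT y|lborel. (c / pi * \<bar>indicator J x * \<psi> x\<bar>) * \<bar>indicator J y * \<phi> y\<bar>)"
    proof (rule integral_mono)
      show "integrable lborel (\<lambda>y. norm (G x y))" using G_int_y by auto
      show "integrable lborel (\<lambda>y. (c / pi * \<bar>indicator J x * \<psi> x\<bar>) * \<bar>indicator J y * \<phi> y\<bar>)"
        using L2_integrable[OF L(1)] by auto
      show "norm (G x y) \<le> (c / pi * \<bar>indicator J x * \<psi> x\<bar>) * \<bar>indicator J y * \<phi> y\<bar>" for y
        using mult_right_mono[OF sinc_kernel_bound[OF c, of "x - y"], of "\<bar>\<phi> y\<bar> * \<bar>\<psi> x\<bar>"]
        unfolding G_def by (auto split: split_indicator simp: abs_mult algebra_simps)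
    qed
    then show ?thesis by (simp add: L1J_def algebra_simps)
  qed
  have G_int: "integrable (lborel \<Otimes>\<^sub>M lborel) (\<lambda>(x,y). G x y)"
  proof (rule lborel_pair.Fubini_integrable[OF G_measurable])
    show "integrable lborel (\<lambda>x. LINT y|lborel. norm (case (x, y) of (x, y) \<Rightarrow> G x y))"
    proof (rule integrable_dominated)
      show "integrable lborel (\<lambda>x. (c / pi * L1J \<phi>) * \<bar>indicator J x * \<psi> x\<bar>)"
        using L2_integrable[OF L(2)] by auto
      show "\<bar>LINT y|lborel. norm (case (x, y) of (x, y) \<Rightarrow> G x y)\<bar>
          \<le> \<bar>(c / pi * L1J \<phi>) * \<bar>indicator J x * \<psi> x\<bar>\<bar>" for x
        using G_abs_bound[of x] c L1J_nonneg[of \<phi>] by simp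
    qed measurable
  qed (use G_int_y in simp)
  have "ipJ (Kop c \<phi>) \<psi> = (LINT x|lborel. LINT y|lborel. G x y)"
    unfolding G_def Kop_def ipJ_def
    by (intro Bochner_Integration.integral_cong refl)
       (simp flip: integral_mult_right_zero add: algebra_simps)
  also have "\<dots> = (LINT y|lborel. LINT x|lborel. G x y)"
    using lborel_pair.Fubini_integral[of G] G_int by simp
  also have "\<dots> = ipJ \<phi> (Kop c \<psi>)"
  proof -
    have "sinc_kernel c (x - y) = sinc_kernel c (y - x)" for x y
      using sinc_kernel_even[of c "y - x"] by simp
    then show ?thesis
      unfolding G_def Kop_def ipJ_def
      by (intro Bochner_Integration.integral_cong refl)
         (simp flip: integral_mult_right_zero add: algebra_simps)
  qed
  finally show ?thesis .
qed

lemma eigenfunctions_orthogonal: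
  assumes c: "c \<ge> 0" and L: "L2 \<phi>" "L2 \<psi>"
    and eig_\<phi>: "AE x in lborel. x \<in> J \<longrightarrow> Kop c \<phi> x = \<mu> * \<phi> x"
    and eig_\<psi>: "AE x in lborel. x \<in> J \<longrightarrow> Kop c \<psi> x = \<nu> * \<psi> x"
    and "\<mu> \<noteq> \<nu>"
  shows "ipJ \<phi> \<psi> = 0"
proof -
  have [measurable]: "\<phi> \<in> borel_measurable borel" "\<psi> \<in> borel_measurable borel" using L by auto
  have "\<mu> * ipJ \<phi> \<psi> = ipJ (Kop c \<phi>) \<psi>"
    using ipJ_cong_AE[of "Kop c \<phi>" "\<lambda>x. \<mu> * \<phi> x" \<psi>] eig_\<phi> by (simp add: ipJ_scale_left)
  also have "\<dots> = ipJ \<phi> (Kop c \<psi>)" by (rule Kop_symmetric[OF c L])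
  also have "\<dots> = \<nu> * ipJ \<phi> \<psi>"
    using ipJ_cong_AE[of "Kop c \<psi>" "\<lambda>x. \<nu> * \<psi> x" \<phi>] eig_\<psi>
    by (simp add: ipJ_scale_left ipJ_commute)
  finally show ?thesis using \<open>\<mu> \<noteq> \<nu>\<close> by simp
qed

section \<open>The core estimate\<close>

text \<open>If \<open>f\<close> is orthogonal to all polynomials of degree \<open>< n\<close>, then the Taylor
  polynomial of the kernel does not contribute to \<open>F\<^sub>c f\<close>, and on [-1,1] we get
  \<open>|F\<^sub>c f| \<le> B(c,n) ||f||\<^sub>1\<close>.\<close>

lemma Kop_poly_orthogonal_bound:
  assumes c: "c \<ge> 0" and Lf: "L2 f" and orth: "\<And>j. j < n \<Longrightarrow> ipJ (\<lambda>y. y^j) f = 0"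
    and x: "x \<in> J"
  shows "\<bar>Kop c f x\<bar> \<le> sinc_remainder_bound c n * L1J f"
proof -
  obtain b where b: "\<And>y. sinc_taylor c n (x - y) = (\<Sum>j<n. b j * y^j)"
    using sinc_taylor_translate by blast
  have L2_taylor: "L2 (\<lambda>y. sinc_taylor c n (x - y))"
    unfolding b using L2_power by (intro L2_lincomb) auto
  have taylor_part: "ipJ (\<lambda>y. sinc_taylor c n (x - y)) f = 0"
    unfolding b using orth by (subst ipJ_lincomb) (auto simp: L2_power Lf)
  define R where "R y = sinc_kernel c (x - y) - sinc_taylor c n (x - y)" for y
  have "Kop c f x = ipJ R f"
    unfolding Kop_def R_def
    by (simp add: ipJ_diff[OF L2_sinc_translate[OF c] L2_taylor Lf] taylor_part)
  also have "\<bar>ipJ R f\<bar> \<le> (LINT y|lborel. \<bar>indicator J y * (R y * f y)\<bar>)"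
    unfolding ipJ_def by (rule integral_abs_bound)
  also have "\<dots> \<le> (LINT y|lborel. sinc_remainder_bound c n * \<bar>indicator J y * f y\<bar>)"
  proof (rule integral_mono)
    have "L2 R"
      unfolding R_def using L2_sinc_translate[OF c] L2_taylor by (rule L2_diff)
    then show "integrable lborel (\<lambda>y. \<bar>indicator J y * (R y * f y)\<bar>)"
      using L2_product_integrable[OF _ Lf] by auto
    show "integrable lborel (\<lambda>y. sinc_remainder_bound c n * \<bar>indicator J y * f y\<bar>)"
      using L2_integrable[OF Lf] by auto
    show "\<bar>indicator J y * (R y * f y)\<bar> \<le> sinc_remainder_bound c n * \<bar>indicator J y * f y\<bar>" for y
    proof (cases "y \<in> J")
      case True
      then have "\<bar>R y\<bar> \<le> sinc_remainder_bound c n"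
        unfolding R_def using x by (intro sinc_taylor_error_on_J[OF c]) auto
      then show ?thesis using True by (simp add: abs_mult mult_right_mono)
    qed simp
  qed
  also have "\<dots> = sinc_remainder_bound c n * L1J f" by (simp add: L1J_def)
  finally show ?thesis .
qed

text \<open>Consequently the quadratic form of \<open>F\<^sub>c\<close> at such an \<open>f\<close> is at most
  \<open>2 B(c,n) ||f||\<^sup>2\<close>; \<open>h\<close> is any representative of \<open>F\<^sub>c f\<close> on [-1,1].\<close>

lemma quadratic_form_upper_bound:
  assumes c: "c \<ge> 0" and Lf: "L2 f" and Lh: "L2 h"
    and orth: "\<And>j. j < n \<Longrightarrow> ipJ (\<lambda>y. y^j) f = 0"
    and h: "AE x in lborel. x \<in> J \<longrightarrow> Kop c f x = h x"
  shows "ipJ h f \<le> 2 * sinc_remainder_bound c n * ipJ f f"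
proof -
  define B where "B = sinc_remainder_bound c n"
  have "ipJ h f \<le> (LINT x|lborel. (B * L1J f) * \<bar>indicator J x * f x\<bar>)"
    unfolding ipJ_def
  proof (rule integral_mono_AE)
    show "integrable lborel (\<lambda>x. indicator J x * (h x * f x))" using L2_product_integrable[OF Lh Lf] .
    show "integrable lborel (\<lambda>x. (B * L1J f) * \<bar>indicator J x * f x\<bar>)"
      using L2_integrable[OF Lf] by auto
    show "AE x in lborel. indicator J x * (h x * f x) \<le> (B * L1J f) * \<bar>indicator J x * f x\<bar>"
      using h
    proof eventually_elim
      case (elim x)
      show ?case
      proof (cases "x \<in> J")
        case True
        then have "\<bar>h x\<bar> \<le> B * L1J f"
          using elim Kop_poly_orthogonal_bound[where n=n, OF c Lf orth True] by (simp add: B_def)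
        then have "\<bar>h x\<bar> * \<bar>f x\<bar> \<le> (B * L1J f) * \<bar>f x\<bar>" by (rule mult_right_mono) simp
        moreover have "h x * f x \<le> \<bar>h x\<bar> * \<bar>f x\<bar>" by (simp add: abs_mult[symmetric])
        ultimately show ?thesis using True by simp
      qed simp
    qed
  qed
  also have "\<dots> = B * (L1J f * L1J f)" by (simp add: L1J_def)
  also have "\<dots> \<le> B * (2 * ipJ f f)"
    using L1J_square_le[OF Lf] c by (intro mult_left_mono) (simp_all add: B_def sinc_remainder_bound_def)
  finally show ?thesis by (simp add: B_def)
qed

lemma ipJ_orthogonal_expansion:
  assumes fin: "finite T" and L: "\<And>t. t \<in> T \<Longrightarrow> L2 (\<psi> t)"
    and orth: "\<And>s t. s \<in> T \<Longrightarrow> t \<in> T \<Longrightarrow> s \<noteq> t \<Longrightarrow> ipJ (\<psi> s) (\<psi> t) = 0"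
  shows "ipJ (\<lambda>x. \<Sum>t\<in>T. a t * \<psi> t x) (\<lambda>x. \<Sum>t\<in>T. b t * \<psi> t x)
       = (\<Sum>t\<in>T. a t * b t * ipJ (\<psi> t) (\<psi> t))"
proof -
  have Lb: "L2 (\<lambda>x. \<Sum>t\<in>T. b t * \<psi> t x)" using fin L by (rule L2_lincomb)
  have column: "ipJ (\<psi> s) (\<lambda>x. \<Sum>t\<in>T. b t * \<psi> t x) = b s * ipJ (\<psi> s) (\<psi> s)" if s: "s \<in> T" for s
  proof -
    have "ipJ (\<psi> s) (\<lambda>x. \<Sum>t\<in>T. b t * \<psi> t x) = (\<Sum>t\<in>T. b t * ipJ (\<psi> t) (\<psi> s))"
      using ipJ_lincomb[OF fin L L[OF s]] by (simp add: ipJ_commute)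
    also have "\<dots> = b s * ipJ (\<psi> s) (\<psi> s) + (\<Sum>t\<in>T - {s}. b t * ipJ (\<psi> t) (\<psi> s))"
      using fin s by (simp add: sum.remove)
    also have "(\<Sum>t\<in>T - {s}. b t * ipJ (\<psi> t) (\<psi> s)) = 0"
      using s orth by (intro sum.neutral) auto
    finally show ?thesis by simp
  qed
  show ?thesis
    using ipJ_lincomb[OF fin L Lb] column by (simp add: mult.assoc)
qed

text \<open>The test function is a nonzero combination of the
  eigenfunctions orthogonal to the polynomials of degree \<open>< n\<close>.\<close>

lemma eigenvalues_above_bound:
  fixes \<psi> :: "real \<Rightarrow> real \<Rightarrow> real"
  assumes c: "c \<ge> 0" and fin: "finite T" and card: "card T = Suc n"
    and L: "\<And>t. t \<in> T \<Longrightarrow> L2 (\<psi> t)"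
    and pos: "\<And>t. t \<in> T \<Longrightarrow> ipJ (\<psi> t) (\<psi> t) > 0"
    and eig: "\<And>t. t \<in> T \<Longrightarrow> AE x in lborel. x \<in> J \<longrightarrow> Kop c (\<psi> t) x = t * \<psi> t x"
    and above: "\<And>t. t \<in> T \<Longrightarrow> lam \<le> t"
  shows "lam \<le> 2 * sinc_remainder_bound c n"
proof -
  have orth: "ipJ (\<psi> s) (\<psi> t) = 0" if "s \<in> T" "t \<in> T" "s \<noteq> t" for s t
    using eigenfunctions_orthogonal[OF c L[OF that(1)] L[OF that(2)] eig[OF that(1)] eig[OF that(2)]]
      that by simp
  obtain \<alpha> where \<alpha>_nonzero: "\<exists>t\<in>T. \<alpha> t \<noteq> 0"
    and \<alpha>_orth: "\<And>j. j < n \<Longrightarrow> (\<Sum>t\<in>T. \<alpha> t * ipJ (\<psi> t) (\<lambda>y. y^j)) = 0"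
    using homogeneous_system_nontrivial_solution[OF fin, of n "\<lambda>t j. ipJ (\<psi> t) (\<lambda>y. y^j)"] card
    by auto
  define f where "f = (\<lambda>x. \<Sum>t\<in>T. \<alpha> t * \<psi> t x)"
  define h where "h = (\<lambda>x. \<Sum>t\<in>T. (\<alpha> t * t) * \<psi> t x)"
  have Lf: "L2 f" and Lh: "L2 h" unfolding f_def h_def using fin L by (auto intro: L2_lincomb)
  have f_orth: "ipJ (\<lambda>y. y^j) f = 0" if "j < n" for j
  proof -
    have "ipJ (\<lambda>y. y^j) f = ipJ f (\<lambda>y. y^j)" by (rule ipJ_commute)
    also have "\<dots> = (\<Sum>t\<in>T. \<alpha> t * ipJ (\<psi> t) (\<lambda>y. y^j))"
      unfolding f_def using fin L L2_power by (rule ipJ_lincomb)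
    finally show ?thesis using \<alpha>_orth[OF that] by simp
  qed
  have Kf: "AE x in lborel. x \<in> J \<longrightarrow> Kop c f x = h x"
  proof -
    have "AE x in lborel. \<forall>t\<in>T. x \<in> J \<longrightarrow> Kop c (\<psi> t) x = t * \<psi> t x"
      using fin eig by (intro eventually_ball_finite) auto
    then show ?thesis
      unfolding f_def h_def by eventually_elim (auto simp: Kop_lincomb[OF c fin L] intro!: sum.cong)
  qed
  have norm_f: "ipJ f f = (\<Sum>t\<in>T. \<alpha> t * \<alpha> t * ipJ (\<psi> t) (\<psi> t))"
    unfolding f_def by (rule ipJ_orthogonal_expansion[of T \<psi>, OF fin L orth])
  have form_f: "ipJ h f = (\<Sum>t\<in>T. t * (\<alpha> t * \<alpha> t * ipJ (\<psi> t) (\<psi> t)))"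
    unfolding f_def h_def
    using ipJ_orthogonal_expansion[of T \<psi> "\<lambda>t. \<alpha> t * t" \<alpha>, OF fin L orth] by (simp add: mult_ac)
  have "0 < ipJ f f"
  proof -
    obtain t0 where t0: "t0 \<in> T" "\<alpha> t0 \<noteq> 0" using \<alpha>_nonzero by auto
    have "0 < \<alpha> t0 * \<alpha> t0 * ipJ (\<psi> t0) (\<psi> t0)"
      using t0(2) pos[OF t0(1)] by (auto simp: zero_less_mult_iff)
    also have "\<dots> \<le> ipJ f f"
      unfolding norm_f using fin t0
      by (intro member_le_sum) (auto intro: mult_nonneg_nonneg[OF zero_le_square ipJ_self_nonneg])
    finally show ?thesis .
  qed
  moreover have "lam * ipJ f f \<le> ipJ h f"
    unfolding norm_f form_f sum_distrib_left
    using above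
    by (intro sum_mono mult_right_mono) (auto intro: mult_nonneg_nonneg[OF zero_le_square ipJ_self_nonneg])
  moreover have "ipJ h f \<le> 2 * sinc_remainder_bound c n * ipJ f f"
    by (rule quadratic_form_upper_bound[OF c Lf Lh f_orth Kf])
  ultimately show ?thesis by (metis mult_le_cancel_right_pos order_trans)
qed

section \<open>The eigenvalue \<open>\<lambda>\<^sub>n(c)\<close>\<close>

lemma eigenvalue_eigenfunction:
  assumes "is_Fc_eigenvalue c \<mu>"
  shows "\<exists>\<psi>. L2 \<psi> \<and> ipJ \<psi> \<psi> > 0 \<and> (AE x in lborel. x \<in> J \<longrightarrow> Kop c \<psi> x = \<mu> * \<psi> x)"
proof -
  obtain \<psi> where m: "\<psi> \<in> borel_measurable lborel"
    and si: "set_integrable lborel J (\<lambda>y. (\<psi> y)\<^sup>2)"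
    and nz: "\<not> (AE x in lborel. x \<in> J \<longrightarrow> \<psi> x = 0)"
    and e: "AE x in lborel. x \<in> J \<longrightarrow> (LINT y:J|lborel. sinc_kernel c (x - y) * \<psi> y) = \<mu> * \<psi> x"
    using assms unfolding is_Fc_eigenvalue_def by blast
  have L: "L2 \<psi>" using m si unfolding L2_def set_integrable_def by simp
  have "ipJ \<psi> \<psi> \<noteq> 0"
  proof
    assume "ipJ \<psi> \<psi> = 0"
    then have "AE x in lborel. indicator J x * (\<psi> x * \<psi> x) = 0"
      using integral_nonneg_eq_0_iff_AE[OF L2_product_integrable[OF L L]]
      by (auto simp: ipJ_def split: split_indicator)
    then have "AE x in lborel. x \<in> J \<longrightarrow> \<psi> x = 0"
      by eventually_elim (auto split: split_indicator)
    with nz show False by blast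
  qed
  with ipJ_self_nonneg[of \<psi>] have "ipJ \<psi> \<psi> > 0" by linarith
  moreover have "AE x in lborel. x \<in> J \<longrightarrow> Kop c \<psi> x = \<mu> * \<psi> x"
    using e unfolding Kop_def ipJ_def set_lebesgue_integral_def by simp
  ultimately show ?thesis using L by blast
qed

lemma prolate_eigenvalue_cases:
  "prolate_eigenvalue c n = 0 \<or>
   (\<exists>T. finite T \<and> card T = Suc n \<and>
        (\<forall>t\<in>T. is_Fc_eigenvalue c t \<and> prolate_eigenvalue c n \<le> t))"
proof -
  define above where "above x = {y. is_Fc_eigenvalue c y \<and> x < y}" for x
  define P where "P x \<longleftrightarrow> is_Fc_eigenvalue c x \<and> 0 < x \<and> finite (above x) \<and> card (above x) = n" for x
  have def: "prolate_eigenvalue c n = (if \<exists>x. P x then THE x. P x else 0)"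
    by (simp only: prolate_eigenvalue_def Let_def P_def above_def)
  show ?thesis
  proof (cases "\<exists>x. P x")
    case True
    then obtain x0 where Px0: "P x0" by blast
    \<comment> \<open>the count of larger eigenvalues is strictly decreasing along eigenvalues\<close>
    have fewer_above: "card (above b) < card (above a)"
      if "P a" "a < b" "is_Fc_eigenvalue c b" for a b
    proof (rule psubset_card_mono)
      show "finite (above a)" using \<open>P a\<close> by (simp add: P_def)
      show "above b \<subset> above a" using that by (auto simp: above_def)
    qed
    have unique: "x = x0" if "P x" for x
    proof (rule ccontr)
      assume "x \<noteq> x0"
      then consider "x < x0" | "x0 < x" by linarith
      then show False
        using fewer_above[OF that] fewer_above[OF Px0] that Px0 by cases (auto simp: P_def)
    qed
    have "(THE x. P x) = x0" using Px0 unique by (rule the_equality)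
    then have val: "prolate_eigenvalue c n = x0" using True by (simp add: def)
    define T where "T = insert x0 (above x0)"
    have "finite T" "card T = Suc n"
      using Px0 by (simp_all add: T_def P_def above_def)
    moreover have "\<forall>t\<in>T. is_Fc_eigenvalue c t \<and> prolate_eigenvalue c n \<le> t"
      using Px0 by (auto simp: T_def P_def above_def val)
    ultimately show ?thesis by blast
  qed (simp add: def)
qed

lemma prolate_eigenvalue_bound:
  assumes c: "c \<ge> 0"
  shows "prolate_eigenvalue c n \<le> 2 * sinc_remainder_bound c n"
  using prolate_eigenvalue_cases[of c n]
proof
  assume "prolate_eigenvalue c n = 0"
  then show ?thesis using c by (simp add: sinc_remainder_bound_def)
next
  assume "\<exists>T. finite T \<and> card T = Suc n \<and> (\<forall>t\<in>T. is_Fc_eigenvalue c t \<and> prolate_eigenvalue c n \<le> t)"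
  then obtain T where T: "finite T" "card T = Suc n"
    and eig: "\<And>t. t \<in> T \<Longrightarrow> is_Fc_eigenvalue c t" and above: "\<And>t. t \<in> T \<Longrightarrow> prolate_eigenvalue c n \<le> t"
    by blast
  define \<psi> where "\<psi> t = (SOME \<psi>. L2 \<psi> \<and> ipJ \<psi> \<psi> > 0 \<and>
      (AE x in lborel. x \<in> J \<longrightarrow> Kop c \<psi> x = t * \<psi> x))" for t
  have \<psi>: "L2 (\<psi> t) \<and> ipJ (\<psi> t) (\<psi> t) > 0 \<and> (AE x in lborel. x \<in> J \<longrightarrow> Kop c (\<psi> t) x = t * \<psi> t x)"
    if "t \<in> T" for t
    unfolding \<psi>_def by (rule someI_ex[OF eigenvalue_eigenfunction[OF eig[OF that]]])
  show ?thesis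
    by (rule eigenvalues_above_bound[OF c T, of \<psi>]) (use \<psi> above in auto)
qed

section \<open>From the factorial bound to exponential decay\<close>

lemma power_div_fact_le_exp: assumes "(x::real) \<ge> 0" shows "x^k / fact k \<le> exp x"
proof -
  have s: "(\<lambda>n. x^n /\<^sub>R fact n) sums exp x" by (rule exp_converges)
  have "sum (\<lambda>n. x^n /\<^sub>R fact n) {k} \<le> suminf (\<lambda>n. x^n /\<^sub>R fact n)"
    using s assms by (intro sum_le_suminf) (auto simp: sums_iff)
  then show ?thesis using s by (simp add: sums_iff divide_inverse mult.commute)
qed

text \<open>With \<open>\<kappa> = 2 exp(\<delta>) / \<delta>\<close> the factorial bound becomes exponential:
  \<open>x\<^sup>k / k! \<le> exp x\<close> applied to \<open>x = 2c exp(\<delta>)\<close>, \<open>k = n + 1\<close>.\<close>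

lemma remainder_bound_exponential:
  assumes \<delta>: "\<delta> > 0" and c: "c \<ge> 0"
  shows "2 * sinc_remainder_bound c n \<le> exp (- \<delta> * (real n - (2 * exp \<delta> / \<delta>) * c))"
proof -
  have "2 * sinc_remainder_bound c n = (2*c)^(Suc n) / fact (Suc n) / pi"
    by (simp add: sinc_remainder_bound_def power_mult_distrib field_simps)
  also have "\<dots> \<le> (2*c)^(Suc n) / fact (Suc n)"
    using c pi_gt3 by (intro divide_left_mono[of 1 pi, simplified]) auto
  also have "\<dots> = (2*c*exp \<delta>)^(Suc n) / fact (Suc n) * exp (- \<delta> * real (Suc n))"
  proof -
    have "exp \<delta> ^ Suc n * exp (- \<delta> * real (Suc n)) = 1"
      by (simp add: exp_of_nat_mult[symmetric] exp_add[symmetric] mult.commute distrib_left)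
    then show ?thesis by (simp add: power_mult_distrib)
  qed
  also have "\<dots> \<le> exp (2*c*exp \<delta>) * exp (- \<delta> * real (Suc n))"
    using c by (intro mult_right_mono power_div_fact_le_exp) auto
  also have "\<dots> = exp (2*c*exp \<delta> - \<delta> * real (Suc n))" by (simp add: exp_add[symmetric])
  also have "\<dots> \<le> exp (- \<delta> * (real n - (2 * exp \<delta> / \<delta>) * c))"
  proof -
    have "\<delta> * ((2 * exp \<delta> / \<delta>) * c) = 2 * c * exp \<delta>" using \<delta> by simp
    then have "2*c*exp \<delta> - \<delta> * real (Suc n) \<le> - \<delta> * (real n - (2 * exp \<delta> / \<delta>) * c)"
      using \<delta> by (simp add: right_diff_distrib)
    then show ?thesis by simp
  qed
  finally show ?thesis .
qed

theorem theorem3: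
  fixes \<delta> :: real
  assumes "\<delta> > 0"
  shows "\<exists>N::nat. \<exists>\<kappa>::real. \<kappa> > 0 \<and>
           (\<forall>c::real. c \<ge> 0 \<longrightarrow> (\<forall>n::nat. real n \<ge> max (real N) (\<kappa> * c) \<longrightarrow>
              prolate_eigenvalue c n \<le> exp (- \<delta> * (real n - \<kappa> * c))))"
proof -
  \<comment> \<open>the bound holds for every \<open>n\<close>, so any \<open>N\<close> works\<close>
  define \<kappa> where "\<kappa> = 2 * exp \<delta> / \<delta>"
  have "\<kappa> > 0" using assms by (simp add: \<kappa>_def)
  moreover have "prolate_eigenvalue c n \<le> exp (- \<delta> * (real n - \<kappa> * c))" if "c \<ge> 0" for c n
    using prolate_eigenvalue_bound[OF that, of n] remainder_bound_exponential[OF assms that, of n]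
    unfolding \<kappa>_def by linarith
  ultimately show ?thesis by blast
qed

end
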